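(* Let $(V_1,\dots,V_n)$ be an $n$-tuple of doubly non-commuting isometries on $H$, let $A=\{i_1,\dots,i_l\}\subseteq\{1,\dots,n\}$ ($l$ distinct indices, possibly $l=0$) with $A^c=\{j_1,\dots,j_{n-l}\}$, and let $W_A=\bigcap_{m_{j_1},\dots,m_{j_{n-l}}\ge0}V_{j_1}^{m_{j_1}}\cdots V_{j_{n-l}}^{m_{j_{n-l}}}\big(\bigcap_{i\in A}\ker V_i^*\big)$ (for $A=\emptyset$ read $\bigcap_{i\in A}\ker V_i^*$ as $H$; for $A=\{1,\dots,n\}$, $W_A=\bigcap_{i=1}^n\ker V_i^*$). Then $W_A\subseteq H_A$ and $H_A=\bigoplus_{k_{i_1},\dots,k_{i_l}\ge0}V_{i_1}^{k_{i_1}}\cdots V_{i_l}^{k_{i_l}}(W_A)$ as an orthogonal Hilbert direct sum (for $A=\emptyset$ this reads $H_\emptyset=W_\emptyset$). Furthermore: (1) for every $i\in A^c$, $W_A$ reduces $V_i$ and $V_i|_{W_A}$ is unitary; (2) $(V_i|_{W_A})^*(V_j|_{W_A})=\overline{z_{ij}}(V_j|_{W_A})(V_i|_{W_A})^*$ for all $i\ne j$ in $A^c$; (3) $V_i^*|_{W_A}=0$ for every $i\in A$; (4) for all $r\in\{1,\dots,l\}$ and $k_{i_1},\dots,k_{i_l}\ge0$, $V_{i_r}\big(V_{i_1}^{k_{i_1}}\cdots V_{i_r}^{k_{i_r}}\cdots V_{i_l}^{k_{i_l}}(W_A)\big)=V_{i_1}^{k_{i_1}}\cdots V_{i_r}^{k_{i_r}+1}\cdots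 V_{i_l}^{k_{i_l}}(W_A)$.
   Context: Fix $n\ge1$ and $z_{ij}\in\mathbb T$ ($i\ne j$) with $z_{ji}=\overline{z_{ij}}$; $(V_1,\dots,V_n)$ is doubly non-commuting if the $V_i$ are isometries on $H$ with $V_i^*V_j=\overline{z_{ij}}V_jV_i^*$ for $i\ne j$. For an isometry $S$: $H^{\mathrm{iso}}(S)=\bigoplus_{k\ge0}S^k(\ker S^* )$, $H^{\mathrm{uni}}(S)=\bigcap_{k\ge0}S^k(H)$. With $P_i^{\mathrm{iso}},P_i^{\mathrm{uni}}$ the (pairwise commuting) projections onto $H^{\mathrm{iso}}(V_i),H^{\mathrm{uni}}(V_i)$, set $H_A=\big(\prod_{i\in A}P_i^{\mathrm{iso}}\prod_{i\in A^c}P_i^{\mathrm{uni}}\big)(H)$, where $A^c$ is the complement in $\{1,\dots,n\}$ and empty products are the identity. Subspaces are closed. *)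

theory Defs
  imports "HOL-Analysis.Analysis"
begin

class complex_inner = real_normed_vector +
  fixes scaleC :: "complex \<Rightarrow> 'a \<Rightarrow> 'a" (infixr "*\<^sub>C" 75)
    and cinner :: "'a \<Rightarrow> 'a \<Rightarrow> complex"
  assumes scaleC_add_right: "a *\<^sub>C (x + y) = a *\<^sub>C x + a *\<^sub>C y"
    and scaleC_add_left: "(a + b) *\<^sub>C x = a *\<^sub>C x + b *\<^sub>C x"
    and scaleC_scaleC: "a *\<^sub>C (b *\<^sub>C x) = (a * b) *\<^sub>C x"
    and scaleC_one: "1 *\<^sub>C x = x"
    and scaleR_scaleC: "scaleR r x = complex_of_real r *\<^sub>C x"
    and cinner_add_right: "cinner x (y + z) = cinner x y + cinner x z"
    and cinner_scaleC_right: "cinner x (a *\<^sub>C y) = a * cinner x y"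
    and cinner_commute: "cinner y x = cnj (cinner x y)"
    and norm_eq_sqrt_cinner: "norm x = sqrt (Re (cinner x x))"

class chilbert_space = complex_inner + complete_space

definition csubspace :: "'a::complex_inner set \<Rightarrow> bool" where
  "csubspace S \<longleftrightarrow> 0 \<in> S \<and> (\<forall>x\<in>S. \<forall>y\<in>S. x + y \<in> S) \<and> (\<forall>a. \<forall>x\<in>S. a *\<^sub>C x \<in> S)"

definition cspan :: "'a::complex_inner set \<Rightarrow> 'a set" where
  "cspan S = \<Inter> {T. csubspace T \<and> S \<subseteq> T}"

definition ccspan :: "'a::complex_inner set \<Rightarrow> 'a set" where
  "ccspan S = closure (cspan S)"

definition corthogonal :: "'a::complex_inner set \<Rightarrow> 'a set \<Rightarrow> bool" where
  "corthogonal M N \<longleftrightarrow> (\<forall>x\<in>M. \<forall>y\<in>N. cinner x y = 0)"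

definition bounded_clinear :: "('a::complex_inner \<Rightarrow> 'a) \<Rightarrow> bool" where
  "bounded_clinear T \<longleftrightarrow> (\<forall>x y. T (x + y) = T x + T y) \<and> (\<forall>a x. T (a *\<^sub>C x) = a *\<^sub>C T x)
     \<and> (\<exists>K. \<forall>x. norm (T x) \<le> norm x * K)"

definition is_adjoint :: "('a::complex_inner \<Rightarrow> 'a) \<Rightarrow> ('a \<Rightarrow> 'a) \<Rightarrow> bool" where
  "is_adjoint T S \<longleftrightarrow> (\<forall>x y. cinner (T x) y = cinner x (S y))"

text \<open>S is the adjoint of the restriction of T to the subspace W (regarded as an operator on W).\<close>
definition is_adjoint_on :: "'a::complex_inner set \<Rightarrow> ('a \<Rightarrow> 'a) \<Rightarrow> ('a \<Rightarrow> 'a) \<Rightarrow> bool" where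
  "is_adjoint_on W T S \<longleftrightarrow> (\<forall>x\<in>W. S x \<in> W) \<and> (\<forall>x\<in>W. \<forall>y\<in>W. cinner (T x) y = cinner x (S y))"

definition isometry :: "('a::complex_inner \<Rightarrow> 'a) \<Rightarrow> bool" where
  "isometry V \<longleftrightarrow> bounded_clinear V \<and> (\<forall>x. norm (V x) = norm x)"

definition ker :: "('a::complex_inner \<Rightarrow> 'a) \<Rightarrow> 'a set" where
  "ker T = {x. T x = 0}"

text \<open>H_iso(S) = orthogonal direct sum of S^k(ker S^*), i.e. the closed span of these (mutually
  orthogonal) subspaces; H_uni(S) = intersection of the ranges of S^k.\<close>
definition H_iso :: "('a::complex_inner \<Rightarrow> 'a) \<Rightarrow> ('a \<Rightarrow> 'a) \<Rightarrow> 'a set" where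
  "H_iso S Ss = ccspan (\<Union>k. (S ^^ k) ` ker Ss)"

definition H_uni :: "('a::complex_inner \<Rightarrow> 'a) \<Rightarrow> 'a set" where
  "H_uni S = (\<Inter>k. range (S ^^ k))"

definition orth_proj :: "'a::complex_inner set \<Rightarrow> 'a \<Rightarrow> 'a" where
  "orth_proj M x = (THE y. y \<in> M \<and> (\<forall>m\<in>M. cinner m (x - y) = 0))"

text \<open>H_A = (prod_{i in A} P_i^iso prod_{i in A^c} P_i^uni)(H), the product taken over
  the indices 1..n in increasing order (the projections commute).\<close>
definition H_A :: "nat \<Rightarrow> (nat \<Rightarrow> 'a::complex_inner \<Rightarrow> 'a) \<Rightarrow> (nat \<Rightarrow> 'a \<Rightarrow> 'a) \<Rightarrow> nat set \<Rightarrow> 'a set" where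
  "H_A n V Vs A = range (foldr (\<circ>)
      (map (\<lambda>i. if i \<in> A then orth_proj (H_iso (V i) (Vs i)) else orth_proj (H_uni (V i))) [1..<Suc n])
      id)"

text \<open>Monomial V_{i_1}^{k_{i_1}} ... V_{i_l}^{k_{i_l}} along the list of indices is = [i_1,...,i_l]
  (exponent of V_i is k i).\<close>
definition vmon :: "(nat \<Rightarrow> 'a \<Rightarrow> 'a) \<Rightarrow> nat list \<Rightarrow> (nat \<Rightarrow> nat) \<Rightarrow> 'a \<Rightarrow> 'a" where
  "vmon V is k = foldr (\<lambda>i f. (V i ^^ k i) \<circ> f) is id"

definition doubly_noncommuting ::
  "nat \<Rightarrow> (nat \<Rightarrow> nat \<Rightarrow> complex) \<Rightarrow> (nat \<Rightarrow> 'a::complex_inner \<Rightarrow> 'a) \<Rightarrow> (nat \<Rightarrow> 'a \<Rightarrow> 'a) \<Rightarrow> bool" where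
  "doubly_noncommuting n z V Vs \<longleftrightarrow>
     (\<forall>i\<in>{1..n}. isometry (V i) \<and> is_adjoint (V i) (Vs i)) \<and>
     (\<forall>i\<in>{1..n}. \<forall>j\<in>{1..n}. i \<noteq> j \<longrightarrow>
        norm (z i j) = 1 \<and> z j i = cnj (z i j) \<and>
        (\<forall>x. Vs i (V j x) = cnj (z i j) *\<^sub>C V j (Vs i x)))"

text \<open>W_A for A enumerated by the list is and A^c by the list js.\<close>
definition W_A :: "(nat \<Rightarrow> 'a::complex_inner \<Rightarrow> 'a) \<Rightarrow> (nat \<Rightarrow> 'a \<Rightarrow> 'a) \<Rightarrow> nat list \<Rightarrow> nat list \<Rightarrow> 'a set" where
  "W_A V Vs is js = (\<Inter>m. vmon V js m ` (\<Inter>i\<in>set is. ker (Vs i)))"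

end

theory Submission
  imports Defs
begin

(* Any two of the operators V_i, V_i^*, V_j, V_j^* (i /= j) commute up to a unimodular scalar,
   so every Wold piece H_iso(V_i), H_uni(V_i) and every kernel of V_i^* reduces V_j for j /= i.
   Hence H_A, the range of the product of the commuting Wold projections, is the intersection of
   the pieces, and W_A is the set of vectors killed by V_i^* for i in A and lying in the unitary
   part of V_j for j outside A. A vector of H_A is the sum of its Wold series
   sum_k V_i^k (I - V_i V_i^* ) (V_i^* )^k x; expanding along the indices of A one at a time puts it
   in the closed span of the monomials applied to W_A. Two monomials with different exponents of
   some V_i are orthogonal because V_i^* W_A = 0 and V_i is an isometry. *)

section \<open>Inner products and bounded operators\<close>

lemma scaleC_zero_right [simp]: "a *\<^sub>C (0::'a::complex_inner) = 0"
  by (metis add_cancel_right_right scaleC_add_right)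

lemma scaleC_minus_one: "(-1) *\<^sub>C (x::'a::complex_inner) = - x"
  by (metis of_real_1 of_real_minus scaleR_minus1_left scaleR_scaleC)

lemma cinner_add_left: "cinner ((x::'a::complex_inner) + y) z = cinner x z + cinner y z"
  by (metis cinner_add_right cinner_commute complex_cnj_add)

lemma cinner_scaleC_left: "cinner (a *\<^sub>C (x::'a::complex_inner)) y = cnj a * cinner x y"
  by (metis cinner_scaleC_right cinner_commute complex_cnj_mult complex_cnj_cnj)

lemma cinner_zero_right [simp]: "cinner (x::'a::complex_inner) 0 = 0"
  by (metis add_cancel_right_right add_0 cinner_add_right)

lemma cinner_zero_left [simp]: "cinner 0 (x::'a::complex_inner) = 0"
  by (metis cinner_commute cinner_zero_right complex_cnj_zero)

lemma cinner_diff_right: "cinner (x::'a::complex_inner) (y - z) = cinner x y - cinner x z"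
proof -
  have "cinner x y = cinner x (y - z) + cinner x z" by (metis cinner_add_right diff_add_cancel)
  then show ?thesis by (simp add: algebra_simps)
qed

lemma cinner_diff_left: "cinner ((x::'a::complex_inner) - y) z = cinner x z - cinner y z"
proof -
  have "cinner x z = cinner (x - y) z + cinner y z" by (metis cinner_add_left diff_add_cancel)
  then show ?thesis by (simp add: algebra_simps)
qed

lemma cinner_minus_right: "cinner (x::'a::complex_inner) (- y) = - cinner x y"
  by (metis add.right_inverse cinner_add_right cinner_zero_right neg_eq_iff_add_eq_0)

lemma cinner_eq_zero_sym: "cinner (x::'a::complex_inner) y = 0 \<longleftrightarrow> cinner y x = 0"
  by (metis cinner_commute complex_cnj_zero_iff)

lemma Re_cinner_self: "Re (cinner (x::'a::complex_inner) x) = norm x ^ 2"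
proof -
  have "Re (cinner x x) \<ge> 0"
    by (metis norm_eq_sqrt_cinner norm_ge_zero not_le real_sqrt_lt_0_iff)
  then show ?thesis by (simp add: norm_eq_sqrt_cinner)
qed

lemma cinner_self: "cinner (x::'a::complex_inner) x = complex_of_real (norm x ^ 2)"
proof -
  have "Im (cinner x x) = Im (cnj (cinner x x))" by (metis cinner_commute)
  then show ?thesis by (intro complex_eqI) (simp_all add: Re_cinner_self)
qed

lemma cinner_self_eq_zero [simp]: "cinner (x::'a::complex_inner) x = 0 \<longleftrightarrow> x = 0"
  by (simp add: cinner_self)

lemma cinner_eqI:
  assumes "\<And>y. cinner y a = cinner y (b::'a::complex_inner)" shows "a = b"
proof -
  have "cinner (a - b) (a - b) = 0" using assms by (simp add: cinner_diff_right)
  then show ?thesis by simp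
qed

lemma power2_norm_add:
  "norm ((x::'a::complex_inner) + y) ^ 2 = norm x ^ 2 + norm y ^ 2 + 2 * Re (cinner x y)"
proof -
  have "Re (cinner y x) = Re (cinner x y)" by (metis cinner_commute complex_cnj_cnj cnj.simps(1))
  then show ?thesis by (simp add: Re_cinner_self[symmetric] cinner_add_left cinner_add_right)
qed

lemma power2_norm_diff:
  "norm ((x::'a::complex_inner) - y) ^ 2 = norm x ^ 2 + norm y ^ 2 - 2 * Re (cinner x y)"
  using power2_norm_add[of x "- y"] by (simp add: cinner_minus_right)

lemma pythagoras: "cinner (x::'a::complex_inner) y = 0 \<Longrightarrow> norm (x + y) ^ 2 = norm x ^ 2 + norm y ^ 2"
  by (simp add: power2_norm_add)

lemma Re_cinner_le: "2 * Re (cinner (x::'a::complex_inner) y) \<le> norm x ^ 2 + norm y ^ 2"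
  using power2_norm_diff[of x y] by (metis diff_ge_0_iff_ge zero_le_power2)

lemma norm_scaleC: "norm (a *\<^sub>C (x::'a::complex_inner)) = cmod a * norm x"
proof -
  have "cinner (a *\<^sub>C x) (a *\<^sub>C x) = cnj a * a * cinner x x"
    by (simp add: cinner_scaleC_left cinner_scaleC_right mult.assoc)
  also have "\<dots> = complex_of_real ((cmod a * norm x) ^ 2)"
    by (simp only: cinner_self mult.commute[of "cnj a"] complex_norm_square[symmetric]
        of_real_mult[symmetric] power_mult_distrib)
  finally have "norm (a *\<^sub>C x) ^ 2 = (cmod a * norm x) ^ 2" by (simp only: cinner_self of_real_eq_iff)
  then show ?thesis by (simp add: power2_eq_iff_nonneg)
qed

text \<open>Polarization: the inner product is determined by norms, so it is continuous and preserved
  by isometries.\<close>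

lemma cinner_polarization: "cinner u (v::'a::complex_inner) =
   Complex ((norm (u + v) ^ 2 - norm (u - v) ^ 2) / 4)
    (- ((norm (u + \<i> *\<^sub>C v) ^ 2 - norm (u - \<i> *\<^sub>C v) ^ 2) / 4))"
proof (rule complex_eqI)
  have Re: "Re (cinner u w) = (norm (u + w) ^ 2 - norm (u - w) ^ 2) / 4" for w :: 'a
    by (simp add: power2_norm_add power2_norm_diff)
  show "Re (cinner u v) = Re (Complex ((norm (u + v) ^ 2 - norm (u - v) ^ 2) / 4)
      (- ((norm (u + \<i> *\<^sub>C v) ^ 2 - norm (u - \<i> *\<^sub>C v) ^ 2) / 4)))"
    by (simp add: Re)
  have "Re (cinner u (\<i> *\<^sub>C v)) = - Im (cinner u v)" by (simp add: cinner_scaleC_right)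
  then show "Im (cinner u v) = Im (Complex ((norm (u + v) ^ 2 - norm (u - v) ^ 2) / 4)
      (- ((norm (u + \<i> *\<^sub>C v) ^ 2 - norm (u - \<i> *\<^sub>C v) ^ 2) / 4)))"
    using Re[of "\<i> *\<^sub>C v"] by simp
qed

lemma bounded_clinear_scaleC_right: "bounded_clinear (\<lambda>x::'a::complex_inner. a *\<^sub>C x)"
  unfolding bounded_clinear_def
  by (auto simp: scaleC_add_right scaleC_scaleC norm_scaleC mult.commute intro!: exI[of _ "cmod a"])

lemma bounded_clinear_bounded_linear: "bounded_clinear T \<Longrightarrow> bounded_linear T"
proof -
  assume T: "bounded_clinear T"
  then obtain K where "\<forall>x. norm (T x) \<le> norm x * K" unfolding bounded_clinear_def by blast
  then show ?thesis
    by (intro bounded_linear_intro[where K=K]) (use T in \<open>auto simp: bounded_clinear_def scaleR_scaleC\<close>)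
qed

lemma bounded_clinear_continuous_on: "bounded_clinear T \<Longrightarrow> continuous_on S T"
  using bounded_clinear_bounded_linear linear_continuous_on by blast

lemma bounded_clinear_add: "bounded_clinear T \<Longrightarrow> T (x + y) = T x + T y"
  by (simp add: bounded_clinear_def)

lemma bounded_clinear_scaleC: "bounded_clinear T \<Longrightarrow> T (a *\<^sub>C x) = a *\<^sub>C T x"
  by (simp add: bounded_clinear_def)

lemma bounded_clinear_zero: "bounded_clinear T \<Longrightarrow> T 0 = 0"
  using bounded_clinear_bounded_linear bounded_linear.linear linear_0 by blast

lemma bounded_clinear_diff: "bounded_clinear T \<Longrightarrow> T (x - y) = T x - T y"
  using bounded_clinear_bounded_linear bounded_linear.linear linear_diff by blast

lemma bounded_clinear_compose:
  assumes T: "bounded_clinear T" and R: "bounded_clinear R"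
  shows "bounded_clinear (T \<circ> R)"
proof -
  have "bounded_linear (\<lambda>x. T (R x))"
    by (rule bounded_linear_compose[OF T[THEN bounded_clinear_bounded_linear]
          R[THEN bounded_clinear_bounded_linear]])
  then obtain K where "\<And>x. norm (T (R x)) \<le> norm x * K"
    using bounded_linear.bounded by blast
  then show ?thesis using T R unfolding bounded_clinear_def comp_def by metis
qed

lemma bounded_clinear_id: "bounded_clinear id"
  unfolding bounded_clinear_def by (auto intro!: exI[of _ 1])

lemma bounded_clinear_funpow: "bounded_clinear T \<Longrightarrow> bounded_clinear (T ^^ k)"
  by (induction k) (auto simp: bounded_clinear_id bounded_clinear_compose)

lemma tendsto_scaleC: "(f \<longlongrightarrow> l) F \<Longrightarrow> ((\<lambda>x. a *\<^sub>C f x) \<longlongrightarrow> a *\<^sub>C (l::'a::complex_inner)) F"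
  using bounded_linear.tendsto[OF bounded_clinear_bounded_linear[OF bounded_clinear_scaleC_right]]
  by blast

lemma tendsto_cinner_right:
  assumes "(f \<longlongrightarrow> (l::'a::complex_inner)) F"
  shows "((\<lambda>x. cinner u (f x)) \<longlongrightarrow> cinner u l) F"
  unfolding cinner_polarization[of u]
  by (intro tendsto_Complex tendsto_divide tendsto_diff tendsto_power tendsto_norm tendsto_add
        tendsto_const assms tendsto_scaleC tendsto_minus) simp_all

lemma closed_cinner_eq_zero: "closed {v::'a::complex_inner. cinner v u = 0}"
proof -
  have "continuous_on UNIV (\<lambda>v. cinner u (v::'a))"
    unfolding continuous_on_def by (auto intro!: tendsto_cinner_right tendsto_ident_at)
  then have "closed {v::'a. cinner u v = 0}"
    using closed_Collect_eq[of "\<lambda>v. cinner u v" "\<lambda>v. 0"] by simp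
  then show ?thesis by (subst cinner_eq_zero_sym)
qed

section \<open>Subspaces and closed spans\<close>

lemma csubspace_0: "csubspace S \<Longrightarrow> 0 \<in> S"
  by (simp add: csubspace_def)

lemma csubspace_add: "csubspace S \<Longrightarrow> x \<in> S \<Longrightarrow> y \<in> S \<Longrightarrow> x + y \<in> S"
  by (simp add: csubspace_def)

lemma csubspace_scaleC: "csubspace S \<Longrightarrow> x \<in> S \<Longrightarrow> a *\<^sub>C x \<in> S"
  by (simp add: csubspace_def)

lemma csubspace_diff: "csubspace S \<Longrightarrow> x \<in> S \<Longrightarrow> y \<in> S \<Longrightarrow> x - y \<in> S"
  using csubspace_add[of S x "(-1) *\<^sub>C y"] csubspace_scaleC[of S y "-1"]
  by (simp add: scaleC_minus_one)

lemma csubspace_sum: "csubspace S \<Longrightarrow> (\<And>i. i \<in> F \<Longrightarrow> f i \<in> S) \<Longrightarrow> sum f F \<in> S"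
  by (induction F rule: infinite_finite_induct) (auto simp: csubspace_0 csubspace_add)

lemma csubspace_INT: "(\<And>i. i \<in> I \<Longrightarrow> csubspace (T i)) \<Longrightarrow> csubspace (\<Inter>i\<in>I. T i)"
  by (simp add: csubspace_def)

lemma csubspace_ker: "bounded_clinear T \<Longrightarrow> csubspace (ker T)"
  unfolding csubspace_def ker_def
  by (simp add: bounded_clinear_zero bounded_clinear_add bounded_clinear_scaleC)

lemma csubspace_range:
  assumes T: "bounded_clinear T" shows "csubspace (range T)"
  unfolding csubspace_def
proof (intro conjI ballI allI)
  show "0 \<in> range T" by (metis T bounded_clinear_zero rangeI)
  show "x + y \<in> range T" if "x \<in> range T" "y \<in> range T" for x y
    using that by (auto simp: bounded_clinear_add[OF T, symmetric])
  show "a *\<^sub>C x \<in> range T" if "x \<in> range T" for a x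
    using that by (auto simp: bounded_clinear_scaleC[OF T, symmetric])
qed

lemma csubspace_cinner_eq_zero: "csubspace {v::'a::complex_inner. cinner v u = 0}"
  unfolding csubspace_def by (auto simp: cinner_add_left cinner_scaleC_left)

lemma csubspace_closure:
  assumes "csubspace (T::'a::complex_inner set)" shows "csubspace (closure T)"
  unfolding csubspace_def
proof (intro conjI ballI allI)
  show "0 \<in> closure T" using assms csubspace_0 closure_subset by blast
next
  fix x y assume "x \<in> closure T" "y \<in> closure T"
  then obtain f g where f: "\<forall>n. f n \<in> T" "f \<longlonglongrightarrow> x" and g: "\<forall>n. g n \<in> T" "g \<longlonglongrightarrow> y"
    unfolding closure_sequential by blast
  have "(\<lambda>n. f n + g n) \<longlonglongrightarrow> x + y" using f g by (intro tendsto_add) auto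
  moreover have "\<forall>n. f n + g n \<in> T" using f g assms csubspace_add by blast
  ultimately show "x + y \<in> closure T"
    unfolding closure_sequential by (intro exI[of _ "\<lambda>n. f n + g n"]) simp
next
  fix a x assume "x \<in> closure T"
  then obtain f where f: "\<forall>n. f n \<in> T" "f \<longlonglongrightarrow> x"
    unfolding closure_sequential by blast
  have "(\<lambda>n. a *\<^sub>C f n) \<longlonglongrightarrow> a *\<^sub>C x" using f by (intro tendsto_scaleC) auto
  moreover have "\<forall>n. a *\<^sub>C f n \<in> T" using f assms csubspace_scaleC by blast
  ultimately show "a *\<^sub>C x \<in> closure T"
    unfolding closure_sequential by (intro exI[of _ "\<lambda>n. a *\<^sub>C f n"]) simp
qed

lemma csubspace_cspan: "csubspace (cspan S)"
  unfolding cspan_def csubspace_def by auto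

lemma cspan_superset: "S \<subseteq> cspan S"
  unfolding cspan_def by auto

lemma cspan_minimal: "csubspace T \<Longrightarrow> S \<subseteq> T \<Longrightarrow> cspan S \<subseteq> T"
  unfolding cspan_def by auto

lemma csubspace_ccspan: "csubspace (ccspan S)"
  unfolding ccspan_def by (intro csubspace_closure csubspace_cspan)

lemma closed_ccspan: "closed (ccspan S)"
  unfolding ccspan_def by simp

lemma ccspan_superset: "S \<subseteq> ccspan S"
  unfolding ccspan_def using cspan_superset closure_subset by blast

lemma ccspan_minimal: "csubspace T \<Longrightarrow> closed T \<Longrightarrow> S \<subseteq> T \<Longrightarrow> ccspan S \<subseteq> T"
  unfolding ccspan_def by (meson closure_minimal cspan_minimal)

lemma ccspan_image_subset:
  assumes R: "bounded_clinear R" and S: "R ` S \<subseteq> ccspan S'"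
  shows "R ` ccspan S \<subseteq> ccspan S'"
proof -
  have "csubspace {x. R x \<in> ccspan S'}"
    unfolding csubspace_def using R csubspace_ccspan[of S']
    by (auto simp: bounded_clinear_zero bounded_clinear_add bounded_clinear_scaleC
        csubspace_0 csubspace_add csubspace_scaleC)
  moreover have "closed {x. R x \<in> ccspan S'}"
    using closed_vimage[OF closed_ccspan bounded_clinear_continuous_on[OF R]] by (simp add: vimage_def)
  ultimately have "ccspan S \<subseteq> {x. R x \<in> ccspan S'}"
    using S by (intro ccspan_minimal) auto
  then show ?thesis by auto
qed

lemma orth_proj_unique:
  assumes M: "csubspace M" and y: "y \<in> M" and orth: "\<forall>m\<in>M. cinner m (x - y) = 0"
  shows "orth_proj M x = y"
  unfolding orth_proj_def
proof (rule the_equality)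
  fix y' assume y': "y' \<in> M \<and> (\<forall>m\<in>M. cinner m (x - y') = 0)"
  then have "y' - y \<in> M" using M y csubspace_diff by blast
  then have "cinner (y' - y) (x - y) - cinner (y' - y) (x - y') = 0" using y' orth by simp
  then have "cinner (y' - y) (y' - y) = 0" by (simp add: cinner_diff_right)
  then show "y' = y" by simp
qed (use y orth in auto)

lemma orth_proj_id: "csubspace M \<Longrightarrow> y \<in> M \<Longrightarrow> orth_proj M y = y"
  by (rule orth_proj_unique) auto

section \<open>The Wold decomposition of an isometry\<close>

lemma funpow_ker_mem_H_iso: "w \<in> ker Ss \<Longrightarrow> (S ^^ k) w \<in> H_iso S Ss"
  unfolding H_iso_def by (rule subsetD[OF ccspan_superset]) blast

lemma csubspace_H_iso: "csubspace (H_iso S Ss)"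
  unfolding H_iso_def by (rule csubspace_ccspan)

lemma closed_H_iso: "closed (H_iso S Ss)"
  unfolding H_iso_def by (rule closed_ccspan)

lemma funpow_mem_invariant: "(\<And>y. y \<in> M \<Longrightarrow> R y \<in> M) \<Longrightarrow> y \<in> M \<Longrightarrow> (R ^^ k) y \<in> M"
  by (induction k) auto

locale adjoint_isometry =
  fixes S Ss :: "'a::chilbert_space \<Rightarrow> 'a"
  assumes isometry: "isometry S" and adjoint: "is_adjoint S Ss"
begin

lemma bounded_clinear_S: "bounded_clinear S"
  using isometry by (simp add: isometry_def)

lemma cinner_S_left: "cinner (S x) y = cinner x (Ss y)"
  using adjoint by (simp add: is_adjoint_def)

lemma cinner_S_right: "cinner x (S y) = cinner (Ss x) y"
  by (metis cinner_S_left cinner_commute)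

lemma cinner_S_S: "cinner (S x) (S y) = cinner x y"
proof -
  have "S x + S y = S (x + y)" "S x - S y = S (x - y)"
       "S x + \<i> *\<^sub>C S y = S (x + \<i> *\<^sub>C y)" "S x - \<i> *\<^sub>C S y = S (x - \<i> *\<^sub>C y)"
    using bounded_clinear_S
    by (simp_all add: bounded_clinear_add bounded_clinear_diff bounded_clinear_scaleC)
  moreover have "norm (S v) = norm v" for v using isometry by (simp add: isometry_def)
  ultimately show ?thesis by (simp add: cinner_polarization[of "S x"] cinner_polarization[of x])
qed

lemma Ss_S [simp]: "Ss (S x) = x"
  by (rule cinner_eqI[symmetric]) (simp add: cinner_S_left[symmetric] cinner_S_S)

lemma bounded_clinear_Ss: "bounded_clinear Ss"
  unfolding bounded_clinear_def
proof (intro conjI allI exI)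
  show "Ss (x + y) = Ss x + Ss y" for x y
    by (rule cinner_eqI) (simp add: cinner_S_left[symmetric] cinner_add_right)
  show "Ss (a *\<^sub>C x) = a *\<^sub>C Ss x" for a x
    by (rule cinner_eqI) (simp add: cinner_S_left[symmetric] cinner_scaleC_right)
  fix y
  have "norm (Ss y) ^ 2 = Re (cinner (S (Ss y)) y)" by (simp add: cinner_S_left Re_cinner_self)
  also have "\<dots> \<le> (norm (S (Ss y)) ^ 2 + norm y ^ 2) / 2"
    using Re_cinner_le[of "S (Ss y)" y] by simp
  finally have "norm (Ss y) ^ 2 \<le> norm y ^ 2"
    using isometry by (simp add: isometry_def)
  then show "norm (Ss y) \<le> norm y * 1" by (simp add: power2_le_iff_abs_le)
qed

lemma bounded_clinear_S_pow: "bounded_clinear (S ^^ k)"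
  by (rule bounded_clinear_funpow[OF bounded_clinear_S])

lemma bounded_clinear_Ss_pow: "bounded_clinear (Ss ^^ k)"
  by (rule bounded_clinear_funpow[OF bounded_clinear_Ss])

lemma cinner_S_pow_left: "cinner ((S ^^ k) x) y = cinner x ((Ss ^^ k) y)"
proof (induction k arbitrary: y)
  case (Suc k)
  have "cinner ((S ^^ Suc k) x) y = cinner ((S ^^ k) x) (Ss y)" by (simp add: cinner_S_left)
  also have "\<dots> = cinner x ((Ss ^^ k) (Ss y))" by (rule Suc)
  finally show ?case by (simp add: funpow_swap1)
qed simp

lemma Ss_pow_S_pow [simp]: "(Ss ^^ k) ((S ^^ k) x) = x"
  by (induction k arbitrary: x) (simp_all add: funpow_swap1)

lemma cinner_S_pow_S_pow: "cinner ((S ^^ k) x) ((S ^^ k) y) = cinner x y"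
  by (simp add: cinner_S_pow_left)

lemma S_pow_mem_range: "k \<le> m \<Longrightarrow> (S ^^ m) x \<in> range (S ^^ k)"
proof -
  assume "k \<le> m"
  then have "(S ^^ m) x = (S ^^ k) ((S ^^ (m - k)) x)"
    by (metis funpow_add le_add_diff_inverse comp_apply)
  then show ?thesis by simp
qed

text \<open>range_proj k is the orthogonal projection onto the range of S^k. These ranges decrease
  to H_uni S, and the projections converge strongly to the projection uni_proj onto it.\<close>

definition range_proj :: "nat \<Rightarrow> 'a \<Rightarrow> 'a" where
  "range_proj k x = (S ^^ k) ((Ss ^^ k) x)"

lemma range_S_pow_eq: "range (S ^^ k) = {y. range_proj k y = y}"
  unfolding range_proj_def by (auto, metis rangeI)

lemma range_proj_eq_self: "u \<in> range (S ^^ k) \<Longrightarrow> (S ^^ k) ((Ss ^^ k) u) = u"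
  using range_S_pow_eq unfolding range_proj_def by blast

lemma closed_range_S_pow: "closed (range (S ^^ k))"
proof -
  have "continuous_on UNIV (range_proj k)"
    using bounded_clinear_continuous_on[OF bounded_clinear_compose[OF bounded_clinear_S_pow
          bounded_clinear_Ss_pow]]
    unfolding range_proj_def by (simp add: comp_def)
  then show ?thesis
    unfolding range_S_pow_eq using closed_Collect_eq[of "range_proj k" "\<lambda>y. y"] by simp
qed

lemma range_proj_mem_range: "k \<le> m \<Longrightarrow> range_proj m x \<in> range (S ^^ k)"
  unfolding range_proj_def by (rule S_pow_mem_range)

lemma cinner_range_proj_orth: "u \<in> range (S ^^ k) \<Longrightarrow> cinner u (x - range_proj k x) = 0"
  unfolding range_proj_def by (auto simp: cinner_diff_right cinner_S_pow_left)

lemma norm_range_proj_decomp: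
  assumes "k \<le> m"
  shows "norm (range_proj k x) ^ 2 = norm (range_proj m x) ^ 2 + norm (range_proj k x - range_proj m x) ^ 2"
proof -
  have "cinner (range_proj m x) (range_proj k x - range_proj m x) =
      cinner (range_proj m x) (x - range_proj m x) - cinner (range_proj m x) (x - range_proj k x)"
    by (simp add: cinner_diff_right)
  also have "\<dots> = 0"
    using cinner_range_proj_orth range_proj_mem_range assms by (metis order_refl diff_self)
  finally have "cinner (range_proj m x) (range_proj k x - range_proj m x) = 0" .
  from pythagoras[OF this] show ?thesis by simp
qed

text \<open>The norms of the projections decrease, and the Pythagorean decomposition turns the
  convergence of these norms into the Cauchy property of the projections themselves.\<close>

lemma Cauchy_range_proj: "Cauchy (\<lambda>k. range_proj k x)"
proof -
  define f where "f k = norm (range_proj k x) ^ 2" for k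
  have dec: "f m \<le> f k" if "k \<le> m" for k m
    using norm_range_proj_decomp[OF that] unfolding f_def by simp
  then have "decseq f" by (simp add: decseq_def)
  moreover have "Bseq f"
  proof -
    have "\<forall>k. norm (f k) \<le> f 0" using dec unfolding f_def by (auto simp: abs_le_iff)
    then show ?thesis by (intro BseqI'[of _ "f 0"]) auto
  qed
  ultimately have "Cauchy f"
    by (simp add: Bseq_monoseq_convergent decseq_imp_monoseq convergent_Cauchy)
  show ?thesis
    unfolding Cauchy_def
  proof (intro allI impI)
    fix e :: real assume "e > 0"
    with \<open>Cauchy f\<close> obtain M where M: "\<forall>m\<ge>M. \<forall>n\<ge>M. dist (f m) (f n) < e ^ 2"
      unfolding Cauchy_def by (meson zero_less_power)
    have close: "norm (range_proj k x - range_proj l x) ^ 2 < e ^ 2"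
      if "k \<ge> M" "l \<ge> M" "k \<le> l" for k l
    proof -
      have "\<bar>norm (range_proj k x) ^ 2 - norm (range_proj l x) ^ 2\<bar> < e ^ 2"
        using M that unfolding f_def dist_real_def by blast
      then show ?thesis using norm_range_proj_decomp[OF that(3), of x] by simp
    qed
    have "dist (range_proj m x) (range_proj n x) < e" if "m \<ge> M" "n \<ge> M" for m n
    proof -
      have "norm (range_proj m x - range_proj n x) ^ 2 < e ^ 2"
        using close[of m n] close[of n m] that by (metis linear norm_minus_commute)
      then show ?thesis using \<open>e > 0\<close> by (simp add: dist_norm power_less_imp_less_base)
    qed
    then show "\<exists>M. \<forall>m\<ge>M. \<forall>n\<ge>M. dist (range_proj m x) (range_proj n x) < e" by blast
  qed
qed

definition uni_proj :: "'a \<Rightarrow> 'a" where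
  "uni_proj x = lim (\<lambda>k. range_proj k x)"

lemma range_proj_tendsto: "(\<lambda>k. range_proj k x) \<longlonglongrightarrow> uni_proj x"
  unfolding uni_proj_def using Cauchy_range_proj Cauchy_convergent convergent_LIMSEQ_iff by blast

lemma closed_H_uni: "closed (H_uni S)"
  unfolding H_uni_def using closed_range_S_pow by blast

lemma csubspace_H_uni: "csubspace (H_uni S)"
  unfolding H_uni_def by (intro csubspace_INT csubspace_range bounded_clinear_S_pow)

lemma uni_proj_mem_H_uni: "uni_proj x \<in> H_uni S"
  unfolding H_uni_def
proof
  fix k
  have "\<forall>\<^sub>F m in sequentially. range_proj m x \<in> range (S ^^ k)"
    unfolding eventually_sequentially using range_proj_mem_range by blast
  then show "uni_proj x \<in> range (S ^^ k)"
    by (rule Lim_in_closed_set[OF closed_range_S_pow _ _ range_proj_tendsto]) simp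
qed

lemma cinner_uni_proj_orth: "u \<in> H_uni S \<Longrightarrow> cinner u (x - uni_proj x) = 0"
proof -
  assume u: "u \<in> H_uni S"
  have "(\<lambda>k. cinner u (x - range_proj k x)) \<longlonglongrightarrow> cinner u (x - uni_proj x)"
    by (intro tendsto_cinner_right tendsto_diff tendsto_const range_proj_tendsto)
  moreover have "cinner u (x - range_proj k x) = 0" for k
    using u cinner_range_proj_orth unfolding H_uni_def by blast
  ultimately have "(\<lambda>k. 0) \<longlonglongrightarrow> cinner u (x - uni_proj x)" by simp
  from LIMSEQ_unique[OF tendsto_const this] show ?thesis by simp
qed

text \<open>defect = I - S S* is the projection onto ker S*; telescoping writes x - range_proj K x
  as a partial sum of the Wold series.\<close>

definition defect :: "'a \<Rightarrow> 'a" where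
  "defect y = y - S (Ss y)"

lemma defect_mem_ker: "defect y \<in> ker Ss"
  unfolding defect_def ker_def using bounded_clinear_Ss by (simp add: bounded_clinear_diff)

lemma diff_range_proj_eq_sum: "x - range_proj K x = (\<Sum>k<K. (S ^^ k) (defect ((Ss ^^ k) x)))"
proof (induction K)
  case (Suc K)
  have "range_proj (Suc K) x = (S ^^ K) (S (Ss ((Ss ^^ K) x)))"
    unfolding range_proj_def by (simp add: funpow_swap1)
  then have "range_proj K x - range_proj (Suc K) x = (S ^^ K) (defect ((Ss ^^ K) x))"
    unfolding range_proj_def defect_def using bounded_clinear_S_pow by (simp add: bounded_clinear_diff)
  then show ?case using Suc by (simp add: algebra_simps)
qed (simp add: range_proj_def)

lemma diff_uni_proj_mem_H_iso: "x - uni_proj x \<in> H_iso S Ss"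
proof -
  have "x - range_proj K x \<in> H_iso S Ss" for K
    unfolding diff_range_proj_eq_sum
    by (rule csubspace_sum[OF csubspace_H_iso funpow_ker_mem_H_iso[OF defect_mem_ker]])
  then show ?thesis
    by (rule closed_sequentially[OF closed_H_iso _ tendsto_diff[OF tendsto_const range_proj_tendsto]])
qed

lemma H_uni_orth_H_iso:
  assumes p: "p \<in> H_uni S" and u: "u \<in> H_iso S Ss"
  shows "cinner u p = 0"
proof -
  have "(S ^^ k) w \<in> {u. cinner u p = 0}" if "w \<in> ker Ss" for k w
  proof -
    from p obtain q where "p = (S ^^ Suc k) q" unfolding H_uni_def by blast
    then have "p = (S ^^ k) (S q)" by (simp add: funpow_swap1)
    then have "cinner ((S ^^ k) w) p = cinner (Ss w) q" by (simp add: cinner_S_pow_S_pow cinner_S_right)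
    then show ?thesis using that by (simp add: ker_def)
  qed
  then have "H_iso S Ss \<subseteq> {u. cinner u p = 0}"
    unfolding H_iso_def
    by (intro ccspan_minimal csubspace_cinner_eq_zero closed_cinner_eq_zero) blast
  then show ?thesis using u by blast
qed

lemma orth_proj_H_uni: "orth_proj (H_uni S) x = uni_proj x"
  by (rule orth_proj_unique[OF csubspace_H_uni uni_proj_mem_H_uni]) (simp add: cinner_uni_proj_orth)

lemma orth_proj_H_iso: "orth_proj (H_iso S Ss) x = x - uni_proj x"
  by (rule orth_proj_unique[OF csubspace_H_iso diff_uni_proj_mem_H_iso])
     (simp add: H_uni_orth_H_iso[OF uni_proj_mem_H_uni])

lemma uni_proj_H_iso: "x \<in> H_iso S Ss \<Longrightarrow> uni_proj x = 0"
proof -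
  assume x: "x \<in> H_iso S Ss"
  have "cinner (uni_proj x) x = 0"
    using H_uni_orth_H_iso[OF uni_proj_mem_H_uni x] cinner_eq_zero_sym by blast
  moreover have "cinner (uni_proj x) (x - uni_proj x) = 0"
    by (rule cinner_uni_proj_orth[OF uni_proj_mem_H_uni])
  ultimately have "cinner (uni_proj x) (uni_proj x) = 0" by (simp add: cinner_diff_right)
  then show ?thesis by simp
qed

lemma H_iso_Wold_series: "x \<in> H_iso S Ss \<Longrightarrow> (\<lambda>K. \<Sum>k<K. (S ^^ k) (defect ((Ss ^^ k) x))) \<longlonglongrightarrow> x"
  using tendsto_diff[OF tendsto_const[of x] range_proj_tendsto[of x]] uni_proj_H_iso
  by (simp add: diff_range_proj_eq_sum[symmetric])

context
  fixes M assumes M: "csubspace M" "\<And>y. y \<in> M \<Longrightarrow> S y \<in> M" "\<And>y. y \<in> M \<Longrightarrow> Ss y \<in> M"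
begin

lemma reducing_defect_mem: "x \<in> M \<Longrightarrow> defect ((Ss ^^ k) x) \<in> M"
proof -
  assume "x \<in> M"
  then have "(Ss ^^ k) x \<in> M" using M(3) by (rule funpow_mem_invariant[rotated])
  then show ?thesis unfolding defect_def using M by (simp add: csubspace_diff)
qed

lemma reducing_uni_proj_mem:
  assumes "closed M" "x \<in> M"
  shows "uni_proj x \<in> M" "x - uni_proj x \<in> M"
proof -
  have "range_proj k x \<in> M" for k
    unfolding range_proj_def using assms(2) M(2,3) by (intro funpow_mem_invariant)
  then show "uni_proj x \<in> M" using closed_sequentially[OF assms(1) _ range_proj_tendsto] by blast
  then show "x - uni_proj x \<in> M" using csubspace_diff[OF M(1) assms(2)] by blast
qed

end

end

section \<open>Quasi-commuting operators and monomials\<close>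

definition quasi_commute :: "('a::complex_inner \<Rightarrow> 'a) \<Rightarrow> ('a \<Rightarrow> 'a) \<Rightarrow> bool" where
  "quasi_commute T R \<longleftrightarrow> (\<exists>c. c \<noteq> 0 \<and> (\<forall>x. T (R x) = c *\<^sub>C R (T x)))"

lemma quasi_commuteI: "c \<noteq> 0 \<Longrightarrow> (\<And>x. T (R x) = c *\<^sub>C R (T x)) \<Longrightarrow> quasi_commute T R"
  unfolding quasi_commute_def by blast

lemma quasi_commute_sym:
  assumes "quasi_commute T R" shows "quasi_commute R T"
proof -
  obtain c where c: "c \<noteq> 0" "\<And>x. T (R x) = c *\<^sub>C R (T x)"
    using assms unfolding quasi_commute_def by blast
  then have "R (T x) = inverse c *\<^sub>C T (R x)" for x by (simp add: scaleC_scaleC scaleC_one)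
  then show ?thesis using c by (intro quasi_commuteI[of "inverse c"]) auto
qed

lemma quasi_commute_funpow_right:
  assumes "quasi_commute T R" "bounded_clinear R" shows "quasi_commute T (R ^^ m)"
proof -
  obtain c where c: "c \<noteq> 0" "\<And>x. T (R x) = c *\<^sub>C R (T x)"
    using assms unfolding quasi_commute_def by blast
  have "T ((R ^^ m) x) = (c ^ m) *\<^sub>C (R ^^ m) (T x)" for x
  proof (induction m)
    case (Suc m)
    have "T ((R ^^ Suc m) x) = c *\<^sub>C R ((c ^ m) *\<^sub>C (R ^^ m) (T x))" by (simp add: c Suc)
    then show ?case by (simp add: bounded_clinear_scaleC[OF assms(2)] scaleC_scaleC)
  qed (simp add: scaleC_one)
  then show ?thesis using c by (intro quasi_commuteI[of "c ^ m"]) auto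
qed

lemma quasi_commute_funpow_left: "quasi_commute T R \<Longrightarrow> bounded_clinear T \<Longrightarrow> quasi_commute (T ^^ m) R"
  using quasi_commute_funpow_right quasi_commute_sym by blast

lemma quasi_commute_ker_invariant:
  assumes "quasi_commute T R" "bounded_clinear R" "x \<in> ker T" shows "R x \<in> ker T"
  using assms bounded_clinear_zero unfolding quasi_commute_def ker_def by fastforce

lemma quasi_commute_funpow_eq:
  assumes "quasi_commute R T" "bounded_clinear T"
  obtains d where "\<And>y. R ((T ^^ k) y) = (T ^^ k) (d *\<^sub>C R y)"
proof -
  obtain d where "\<And>x. R ((T ^^ k) x) = d *\<^sub>C (T ^^ k) (R x)"
    using quasi_commute_funpow_right[OF assms] unfolding quasi_commute_def by blast
  then show ?thesis
    using that bounded_clinear_scaleC[OF bounded_clinear_funpow[OF assms(2)]] by simp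
qed

lemma quasi_commute_H_uni_invariant:
  assumes "quasi_commute R T" "bounded_clinear T" "x \<in> H_uni T" shows "R x \<in> H_uni T"
  unfolding H_uni_def
proof
  fix k
  obtain d where d: "\<And>y. R ((T ^^ k) y) = (T ^^ k) (d *\<^sub>C R y)"
    using quasi_commute_funpow_eq[OF assms(1,2)] by blast
  from assms(3) obtain y where "x = (T ^^ k) y" unfolding H_uni_def by blast
  then show "R x \<in> range (T ^^ k)" using d by simp
qed

lemma quasi_commute_H_iso_invariant:
  assumes "quasi_commute R T" "quasi_commute Ts R"
    and R: "bounded_clinear R" and T: "bounded_clinear T" and Ts: "bounded_clinear Ts"
    and x: "x \<in> H_iso T Ts"
  shows "R x \<in> H_iso T Ts"
proof -
  have "R ((T ^^ k) w) \<in> H_iso T Ts" if w: "w \<in> ker Ts" for k w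
  proof -
    obtain d where d: "\<And>y. R ((T ^^ k) y) = (T ^^ k) (d *\<^sub>C R y)"
      using quasi_commute_funpow_eq[OF assms(1) T] by blast
    have "d *\<^sub>C R w \<in> ker Ts"
      using quasi_commute_ker_invariant[OF assms(2) R w] bounded_clinear_scaleC[OF Ts]
      by (simp add: ker_def)
    then show ?thesis unfolding d by (rule funpow_ker_mem_H_iso)
  qed
  then have "R ` (\<Union>k. (T ^^ k) ` ker Ts) \<subseteq> ccspan (\<Union>k. (T ^^ k) ` ker Ts)"
    unfolding H_iso_def by blast
  from ccspan_image_subset[OF R this] x show ?thesis unfolding H_iso_def by blast
qed

lemma vmon_Nil [simp]: "vmon V [] k = id"
  by (simp add: vmon_def)

lemma vmon_Cons: "vmon V (i # l) k x = (V i ^^ k i) (vmon V l k x)"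
  by (simp add: vmon_def)

lemma vmon_cong: "(\<And>i. i \<in> set l \<Longrightarrow> k i = k' i) \<Longrightarrow> vmon V l k = vmon V l k'"
  by (induction l) (auto simp: vmon_def)

lemma vmon_Cons_fun_upd:
  assumes "a \<notin> set l" shows "vmon V (a # l) (k(a := m)) w = (V a ^^ m) (vmon V l k w)"
proof -
  have "vmon V l (k(a := m)) = vmon V l k" by (rule vmon_cong) (use assms in auto)
  then show ?thesis by (simp add: vmon_Cons)
qed

lemma vmon_zero: "vmon V l (\<lambda>_. 0) = id"
  by (induction l) (simp_all add: vmon_def)

lemma vmon_single: "distinct l \<Longrightarrow> j \<in> set l \<Longrightarrow> vmon V l ((\<lambda>_. 0)(j := k)) = V j ^^ k"
proof (induction l)
  case (Cons a l)
  show ?case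
  proof (cases "a = j")
    case True
    with Cons have "vmon V l ((\<lambda>_. 0)(j := k)) = vmon V l (\<lambda>_. 0)" by (intro vmon_cong) auto
    then have "vmon V l ((\<lambda>_. 0)(j := k)) = id" by (simp only: vmon_zero)
    with True show ?thesis by (intro ext) (simp only: vmon_Cons fun_upd_same id_apply)
  qed (use Cons in \<open>simp add: vmon_Cons fun_eq_iff\<close>)
qed simp

lemma vmon_mem_invariant:
  "(\<And>j y. j \<in> set l \<Longrightarrow> y \<in> M \<Longrightarrow> V j y \<in> M) \<Longrightarrow> y \<in> M \<Longrightarrow> vmon V l k y \<in> M"
  by (induction l) (simp_all add: vmon_Cons funpow_mem_invariant)

lemma bounded_clinear_vmon:
  "(\<And>j. j \<in> set l \<Longrightarrow> bounded_clinear (V j)) \<Longrightarrow> bounded_clinear (vmon V l k)"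
proof (induction l)
  case (Cons a l)
  have "vmon V (a # l) k = (V a ^^ k a) \<circ> vmon V l k" by (simp add: vmon_def)
  moreover have "bounded_clinear ((V a ^^ k a) \<circ> vmon V l k)"
    using Cons by (intro bounded_clinear_compose bounded_clinear_funpow) auto
  ultimately show ?case by (simp only:)
qed (simp add: bounded_clinear_id)

lemma vmon_fun_upd_eq:
  assumes "distinct l" "i \<in> set l"
    and qc: "\<And>j. j \<in> set l \<Longrightarrow> j \<noteq> i \<Longrightarrow> quasi_commute (V j) (V i)"
    and bcl: "\<And>j. j \<in> set l \<Longrightarrow> bounded_clinear (V j)"
  shows "\<exists>c. c \<noteq> 0 \<and> vmon V l (k(i := m)) y = c *\<^sub>C (V i ^^ m) (vmon V l (k(i := 0)) y)"
  using assms
proof (induction l)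
  case (Cons j l)
  show ?case
  proof (cases "j = i")
    case True
    with Cons.prems have "vmon V l (k(i := m)) = vmon V l (k(i := 0))" by (intro vmon_cong) auto
    with True show ?thesis
      by (intro exI[of _ 1]) (simp only: vmon_Cons fun_upd_same funpow_0 id_apply scaleC_one one_neq_zero simp_thms)
  next
    case False
    have "\<exists>c. c \<noteq> 0 \<and> vmon V l (k(i := m)) y = c *\<^sub>C (V i ^^ m) (vmon V l (k(i := 0)) y)"
      by (rule Cons.IH) (use Cons.prems False in auto)
    then obtain c where c: "c \<noteq> 0" "vmon V l (k(i := m)) y = c *\<^sub>C (V i ^^ m) (vmon V l (k(i := 0)) y)"
      by blast
    have "quasi_commute (V j ^^ k j) (V i ^^ m)"
      using Cons.prems False
      by (intro quasi_commute_funpow_left quasi_commute_funpow_right) auto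
    then obtain d where d: "d \<noteq> 0" "\<And>x. (V j ^^ k j) ((V i ^^ m) x) = d *\<^sub>C (V i ^^ m) ((V j ^^ k j) x)"
      unfolding quasi_commute_def by blast
    have "vmon V (j # l) (k(i := m)) y = (V j ^^ k j) (c *\<^sub>C (V i ^^ m) (vmon V l (k(i := 0)) y))"
      using False c(2) by (simp add: vmon_Cons)
    also have "\<dots> = (c * d) *\<^sub>C (V i ^^ m) (vmon V (j # l) (k(i := 0)) y)"
      using False Cons.prems(4)
      by (simp add: vmon_Cons bounded_clinear_scaleC[OF bounded_clinear_funpow] d(2) scaleC_scaleC)
    finally show ?thesis using c(1) d(1) mult_eq_0_iff by blast
  qed
qed simp

section \<open>Doubly non-commuting tuples\<close>

locale dnc_tuple =
  fixes n :: nat and z :: "nat \<Rightarrow> nat \<Rightarrow> complex" and V Vs :: "nat \<Rightarrow> 'a::chilbert_space \<Rightarrow> 'a"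
  assumes dnc: "doubly_noncommuting n z V Vs"
begin

lemma adjoint_isometry_V: "i \<in> {1..n} \<Longrightarrow> adjoint_isometry (V i) (Vs i)"
  using dnc unfolding doubly_noncommuting_def by (intro adjoint_isometry.intro) auto

lemma bounded_clinear_V: "i \<in> {1..n} \<Longrightarrow> bounded_clinear (V i)"
  using adjoint_isometry.bounded_clinear_S[OF adjoint_isometry_V] .

lemma bounded_clinear_Vs: "i \<in> {1..n} \<Longrightarrow> bounded_clinear (Vs i)"
  using adjoint_isometry.bounded_clinear_Ss[OF adjoint_isometry_V] .

lemma Vs_V: "i \<in> {1..n} \<Longrightarrow> Vs i (V i x) = x"
  using adjoint_isometry.Ss_S[OF adjoint_isometry_V] .

context
  fixes i j assumes ij: "i \<in> {1..n}" "j \<in> {1..n}" "i \<noteq> j"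
begin

lemma dnc_pair:
  "cmod (z i j) = 1 \<and> z j i = cnj (z i j) \<and> (\<forall>x. Vs i (V j x) = cnj (z i j) *\<^sub>C V j (Vs i x))"
  using dnc ij unfolding doubly_noncommuting_def by (meson conjunct2)

lemma Vs_V_commute: "Vs i (V j x) = cnj (z i j) *\<^sub>C V j (Vs i x)"
  using dnc_pair by blast

lemma z_unimodular: "cnj (z i j) * z i j = 1" "z j i = cnj (z i j)"
proof -
  have "cmod (z i j) = 1" "z j i = cnj (z i j)"
    using dnc_pair by blast+
  then show "cnj (z i j) * z i j = 1" "z j i = cnj (z i j)"
    by (simp_all add: mult.commute complex_norm_square[symmetric])
qed

lemma z_nonzero: "z i j \<noteq> 0" "cnj (z i j) \<noteq> 0"
  using z_unimodular(1) by auto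

text \<open>The commutation relation of V i and V j follows from the one of Vs i and V j: the
  vector X below is killed by both Vs i and Vs j, hence orthogonal to itself.\<close>

lemma V_V_commute: "V j (V i x) = cnj (z i j) *\<^sub>C V i (V j x)"
proof -
  interpret I: adjoint_isometry "V i" "Vs i" by (rule adjoint_isometry_V[OF ij(1)])
  interpret J: adjoint_isometry "V j" "Vs j" by (rule adjoint_isometry_V[OF ij(2)])
  define X where "X = V j (V i x) - cnj (z i j) *\<^sub>C V i (V j x)"
  have "Vs i X = 0"
    unfolding X_def using I.bounded_clinear_Ss Vs_V_commute
    by (simp add: bounded_clinear_diff bounded_clinear_scaleC)
  moreover have "Vs j X = V i x - (cnj (z i j) * cnj (z j i)) *\<^sub>C V i x"
    unfolding X_def using J.bounded_clinear_Ss dnc_tuple.Vs_V_commute[OF dnc_tuple_axioms ij(2,1)] ij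
    by (simp add: bounded_clinear_diff bounded_clinear_scaleC scaleC_scaleC)
  then have "Vs j X = 0"
    using z_unimodular by (simp add: scaleC_one mult.commute)
  moreover have "cinner X X = cinner (V j (V i x)) X - cnj (cnj (z i j)) * cinner (V i (V j x)) X"
    unfolding X_def by (simp add: cinner_diff_left cinner_scaleC_left)
  ultimately have "cinner X X = 0" by (simp add: I.cinner_S_left J.cinner_S_left)
  then show ?thesis unfolding X_def by simp
qed

lemma Vs_Vs_commute: "Vs i (Vs j x) = z i j *\<^sub>C Vs j (Vs i x)"
proof (rule cinner_eqI)
  interpret I: adjoint_isometry "V i" "Vs i" by (rule adjoint_isometry_V[OF ij(1)])
  interpret J: adjoint_isometry "V j" "Vs j" by (rule adjoint_isometry_V[OF ij(2)])
  fix y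
  have "cinner y (Vs i (Vs j x)) = cinner (V j (V i y)) x"
    by (simp add: I.cinner_S_left J.cinner_S_left)
  also have "\<dots> = z i j * cinner (V i (V j y)) x"
    by (simp add: V_V_commute cinner_scaleC_left)
  also have "\<dots> = cinner y (z i j *\<^sub>C Vs j (Vs i x))"
    by (simp add: I.cinner_S_left J.cinner_S_left cinner_scaleC_right)
  finally show "cinner y (Vs i (Vs j x)) = cinner y (z i j *\<^sub>C Vs j (Vs i x))" .
qed

lemma quasi_commute_V_V: "quasi_commute (V j) (V i)"
  using V_V_commute z_nonzero by (intro quasi_commuteI)

lemma quasi_commute_Vs_V: "quasi_commute (Vs i) (V j)"
  using Vs_V_commute z_nonzero by (intro quasi_commuteI)

lemma quasi_commute_Vs_Vs: "quasi_commute (Vs i) (Vs j)"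
  using Vs_Vs_commute z_nonzero by (intro quasi_commuteI)

end

context
  fixes a i assumes ai: "a \<in> {1..n}" "i \<in> {1..n}" "a \<noteq> i"
begin

lemma H_iso_invariant:
  assumes "y \<in> H_iso (V i) (Vs i)"
  shows "V a y \<in> H_iso (V i) (Vs i)" "Vs a y \<in> H_iso (V i) (Vs i)"
proof -
  have ia: "i \<noteq> a" using ai(3) by simp
  show "V a y \<in> H_iso (V i) (Vs i)"
    by (rule quasi_commute_H_iso_invariant[OF quasi_commute_sym[OF quasi_commute_V_V[OF ai]]
          quasi_commute_Vs_V[OF ai(2,1) ia] bounded_clinear_V[OF ai(1)] bounded_clinear_V[OF ai(2)]
          bounded_clinear_Vs[OF ai(2)] assms])
  show "Vs a y \<in> H_iso (V i) (Vs i)"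
    by (rule quasi_commute_H_iso_invariant[OF quasi_commute_Vs_V[OF ai] quasi_commute_Vs_Vs[OF ai(2,1) ia]
          bounded_clinear_Vs[OF ai(1)] bounded_clinear_V[OF ai(2)] bounded_clinear_Vs[OF ai(2)] assms])
qed

lemma H_uni_invariant:
  assumes "y \<in> H_uni (V i)"
  shows "V a y \<in> H_uni (V i)" "Vs a y \<in> H_uni (V i)"
  by (rule quasi_commute_H_uni_invariant[OF quasi_commute_sym[OF quasi_commute_V_V[OF ai]]
        bounded_clinear_V[OF ai(2)] assms],
      rule quasi_commute_H_uni_invariant[OF quasi_commute_Vs_V[OF ai] bounded_clinear_V[OF ai(2)] assms])

lemma ker_Vs_invariant:
  assumes "y \<in> ker (Vs i)"
  shows "V a y \<in> ker (Vs i)" "Vs a y \<in> ker (Vs i)"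
proof -
  have ia: "i \<noteq> a" using ai(3) by simp
  show "V a y \<in> ker (Vs i)"
    by (rule quasi_commute_ker_invariant[OF quasi_commute_Vs_V[OF ai(2,1) ia] bounded_clinear_V[OF ai(1)] assms])
  show "Vs a y \<in> ker (Vs i)"
    by (rule quasi_commute_ker_invariant[OF quasi_commute_Vs_Vs[OF ai(2,1) ia] bounded_clinear_Vs[OF ai(1)] assms])
qed

end

lemma H_iso_V_invariant:
  assumes a: "a \<in> {1..n}" and y: "y \<in> H_iso (V a) (Vs a)"
  shows "V a y \<in> H_iso (V a) (Vs a)"
proof -
  have "V a ` (\<Union>k. (V a ^^ k) ` ker (Vs a)) \<subseteq> ccspan (\<Union>k. (V a ^^ k) ` ker (Vs a))"
  proof clarify
    fix k w assume "w \<in> ker (Vs a)"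
    then have "(V a ^^ Suc k) w \<in> H_iso (V a) (Vs a)" by (rule funpow_ker_mem_H_iso)
    then show "V a ((V a ^^ k) w) \<in> ccspan (\<Union>k. (V a ^^ k) ` ker (Vs a))"
      unfolding H_iso_def by simp
  qed
  from ccspan_image_subset[OF bounded_clinear_V[OF a] this] y show ?thesis
    unfolding H_iso_def by blast
qed

lemma H_uni_V_invariant:
  assumes a: "a \<in> {1..n}" and y: "y \<in> H_uni (V a)"
  shows "V a y \<in> H_uni (V a)" "Vs a y \<in> H_uni (V a)"
proof -
  show "V a y \<in> H_uni (V a)"
    unfolding H_uni_def
  proof
    fix k
    from y obtain t where "y = (V a ^^ k) t" unfolding H_uni_def by blast
    then have "V a y = (V a ^^ k) (V a t)" by (simp add: funpow_swap1)
    then show "V a y \<in> range (V a ^^ k)" by simp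
  qed
  show "Vs a y \<in> H_uni (V a)"
    unfolding H_uni_def
  proof
    fix k
    from y obtain t where "y = (V a ^^ Suc k) t" unfolding H_uni_def by blast
    then show "Vs a y \<in> range (V a ^^ k)" using Vs_V[OF a] by simp
  qed
qed

lemma vmon_ker_Vs:
  assumes "set l \<subseteq> {1..n}" "i \<in> {1..n}" "k i = 0" "w \<in> ker (Vs i)"
  shows "vmon V l k w \<in> ker (Vs i)"
  using assms
proof (induction l)
  case (Cons j l)
  then have IH: "vmon V l k w \<in> ker (Vs i)" by simp
  show ?case
  proof (cases "j = i")
    case False
    with Cons.prems have "\<And>y. y \<in> ker (Vs i) \<Longrightarrow> V j y \<in> ker (Vs i)"
      using ker_Vs_invariant(1)[of j i] by simp
    then show ?thesis unfolding vmon_Cons by (rule funpow_mem_invariant[OF _ IH])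
  qed (use IH Cons.prems in \<open>simp add: vmon_Cons\<close>)
qed simp

end

section \<open>The subspaces H_A and W_A\<close>

locale dnc_partition = dnc_tuple n z V Vs
  for n :: nat and z :: "nat \<Rightarrow> nat \<Rightarrow> complex" and V Vs :: "nat \<Rightarrow> 'a::chilbert_space \<Rightarrow> 'a" +
  fixes A :: "nat set" and ls ms :: "nat list"
  assumes A_subset: "A \<subseteq> {1..n}" and distinct_ls: "distinct ls" and set_ls: "set ls = A"
    and distinct_ms: "distinct ms" and set_ms: "set ms = {1..n} - A"
begin

definition wold_piece :: "nat \<Rightarrow> 'a set" where
  "wold_piece i = (if i \<in> A then H_iso (V i) (Vs i) else H_uni (V i))"

lemma csubspace_wold_piece: "i \<in> {1..n} \<Longrightarrow> csubspace (wold_piece i)"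
  unfolding wold_piece_def
  by (simp add: csubspace_H_iso adjoint_isometry.csubspace_H_uni[OF adjoint_isometry_V])

lemma closed_wold_piece: "i \<in> {1..n} \<Longrightarrow> closed (wold_piece i)"
  unfolding wold_piece_def
  by (simp add: closed_H_iso adjoint_isometry.closed_H_uni[OF adjoint_isometry_V])

lemma wold_piece_reducing:
  assumes "a \<in> {1..n}" "i \<in> {1..n}" "a \<noteq> i" "y \<in> wold_piece i"
  shows "V a y \<in> wold_piece i" "Vs a y \<in> wold_piece i"
  using assms H_iso_invariant[OF assms(1-3)] H_uni_invariant[OF assms(1-3)]
  unfolding wold_piece_def by (auto split: if_splits)

lemma orth_proj_wold_piece_mem: "i \<in> {1..n} \<Longrightarrow> orth_proj (wold_piece i) y \<in> wold_piece i"
  unfolding wold_piece_def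
  using adjoint_isometry.orth_proj_H_iso[OF adjoint_isometry_V]
    adjoint_isometry.orth_proj_H_uni[OF adjoint_isometry_V]
    adjoint_isometry.diff_uni_proj_mem_H_iso[OF adjoint_isometry_V]
    adjoint_isometry.uni_proj_mem_H_uni[OF adjoint_isometry_V]
  by simp

lemma orth_proj_wold_piece_invariant:
  assumes a: "a \<in> {1..n}" and i: "i \<in> {1..n}" "a \<noteq> i" and y: "y \<in> wold_piece i"
  shows "orth_proj (wold_piece a) y \<in> wold_piece i"
proof -
  interpret Va: adjoint_isometry "V a" "Vs a" by (rule adjoint_isometry_V[OF a])
  have "Va.uni_proj y \<in> wold_piece i" "y - Va.uni_proj y \<in> wold_piece i"
    using Va.reducing_uni_proj_mem[OF csubspace_wold_piece[OF i(1)] _ _ closed_wold_piece[OF i(1)] y]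
      wold_piece_reducing[OF a i] by auto
  moreover have "orth_proj (wold_piece a) y = (if a \<in> A then y - Va.uni_proj y else Va.uni_proj y)"
    unfolding wold_piece_def by (simp add: Va.orth_proj_H_iso Va.orth_proj_H_uni)
  ultimately show ?thesis by simp
qed

text \<open>Each projection maps into its own piece and preserves the other pieces, so the product
  of the projections defining H_A has the intersection of the pieces as its range.\<close>

lemma foldr_orth_proj_mem:
  "set l \<subseteq> {1..n} \<Longrightarrow> i \<in> set l \<Longrightarrow> foldr (\<circ>) (map (\<lambda>i. orth_proj (wold_piece i)) l) id x \<in> wold_piece i"
proof (induction l)
  case (Cons a l)
  then show ?case
    using orth_proj_wold_piece_mem orth_proj_wold_piece_invariant by (cases "i = a") auto
qed simp

lemma foldr_orth_proj_id:
  "set l \<subseteq> {1..n} \<Longrightarrow> (\<forall>i\<in>{1..n}. x \<in> wold_piece i) \<Longrightarrow>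
    foldr (\<circ>) (map (\<lambda>i. orth_proj (wold_piece i)) l) id x = x"
  by (induction l) (auto simp: orth_proj_id csubspace_wold_piece)

lemma H_A_eq_INT: "H_A n V Vs A = (\<Inter>i\<in>{1..n}. wold_piece i)"
proof -
  define P where "P = foldr (\<circ>) (map (\<lambda>i. orth_proj (wold_piece i)) [1..<Suc n]) id"
  have "(\<lambda>i. if i \<in> A then orth_proj (H_iso (V i) (Vs i)) else orth_proj (H_uni (V i))) =
      (\<lambda>i. orth_proj (wold_piece i))"
    unfolding wold_piece_def by auto
  then have H_A: "H_A n V Vs A = range P" unfolding H_A_def P_def by simp
  have set: "set [1..<Suc n] = {1..n}" by auto
  show ?thesis
  proof (intro equalityI subsetI)
    show "x \<in> (\<Inter>i\<in>{1..n}. wold_piece i)" if "x \<in> H_A n V Vs A" for x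
      using that foldr_orth_proj_mem[of "[1..<Suc n]"] unfolding H_A set P_def by auto
    show "x \<in> H_A n V Vs A" if "x \<in> (\<Inter>i\<in>{1..n}. wold_piece i)" for x
    proof -
      have "P x = x" unfolding P_def using that by (intro foldr_orth_proj_id) (auto simp: set)
      then show ?thesis unfolding H_A by (metis rangeI)
    qed
  qed
qed

end

context dnc_partition
begin

abbreviation W where "W \<equiv> W_A V Vs ls ms"

text \<open>The mixed parts interpolate between W (l = []) and H_A (set l = A).\<close>

definition mixed_part :: "nat list \<Rightarrow> 'a set" where
  "mixed_part l = {x. (\<forall>i\<in>set l. x \<in> H_iso (V i) (Vs i)) \<and> (\<forall>b\<in>A - set l. x \<in> ker (Vs b))
      \<and> (\<forall>j\<in>{1..n} - A. x \<in> H_uni (V j))}"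

lemma mixed_part_unitary_invariant:
  assumes i: "i \<in> {1..n} - A" and l: "set l \<subseteq> A" and x: "x \<in> mixed_part l"
  shows "V i x \<in> mixed_part l" "Vs i x \<in> mixed_part l"
proof -
  have iN: "i \<in> {1..n}" using i by simp
  have A: "b \<in> {1..n}" "i \<noteq> b" if "b \<in> A" for b using i that A_subset by auto
  have "T x \<in> mixed_part l" if T: "T = V i \<or> T = Vs i" for T
  proof -
    have "T x \<in> H_iso (V b) (Vs b)" if "b \<in> set l" for b
      using that T x l A H_iso_invariant[OF iN] unfolding mixed_part_def by blast
    moreover have "T x \<in> ker (Vs b)" if "b \<in> A - set l" for b
      using that T x A ker_Vs_invariant[OF iN] unfolding mixed_part_def by blast
    moreover have "T x \<in> H_uni (V j)" if j: "j \<in> {1..n} - A" for j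
    proof (cases "j = i")
      case True
      then show ?thesis using T x j H_uni_V_invariant[OF iN] unfolding mixed_part_def by auto
    next
      case False
      then show ?thesis using T x j H_uni_invariant[OF iN] unfolding mixed_part_def by auto
    qed
    ultimately show ?thesis unfolding mixed_part_def by blast
  qed
  then show "V i x \<in> mixed_part l" "Vs i x \<in> mixed_part l" by blast+
qed

lemma mixed_part_isometric_invariant:
  assumes a: "a \<in> set l" and l: "set l \<subseteq> A" and x: "x \<in> mixed_part l"
  shows "V a x \<in> mixed_part l"
proof -
  have aN: "a \<in> {1..n}" and bN: "\<And>b. b \<in> A \<Longrightarrow> b \<in> {1..n}" using a l A_subset by auto
  have "V a x \<in> H_iso (V i) (Vs i)" if i: "i \<in> set l" for i
  proof (cases "i = a")
    case True
    then show ?thesis using i x H_iso_V_invariant[OF aN] unfolding mixed_part_def by auto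
  next
    case False
    then show ?thesis using i x l bN H_iso_invariant(1)[OF aN] unfolding mixed_part_def by blast
  qed
  moreover have "V a x \<in> ker (Vs b)" if "b \<in> A - set l" for b
    using that x a bN ker_Vs_invariant(1)[OF aN] unfolding mixed_part_def by blast
  moreover have "V a x \<in> H_uni (V j)" if "j \<in> {1..n} - A" for j
    using that x a l H_uni_invariant(1)[OF aN] unfolding mixed_part_def by blast
  ultimately show ?thesis unfolding mixed_part_def by blast
qed

lemma mixed_part_Nil_eq: "mixed_part [] = {x. (\<forall>a\<in>A. Vs a x = 0) \<and> (\<forall>j\<in>{1..n} - A. x \<in> H_uni (V j))}"
  unfolding mixed_part_def ker_def by auto

lemma csubspace_mixed_part_Nil: "csubspace (mixed_part [])"
proof -
  have eq: "mixed_part [] = (\<Inter>i\<in>{1..n}. if i \<in> A then ker (Vs i) else H_uni (V i))"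
    unfolding mixed_part_def using A_subset by (auto split: if_splits)
  have "csubspace (if i \<in> A then ker (Vs i) else H_uni (V i))" if "i \<in> {1..n}" for i
    using that csubspace_ker[OF bounded_clinear_Vs] adjoint_isometry.csubspace_H_uni[OF adjoint_isometry_V]
    by simp
  then show ?thesis unfolding eq by (rule csubspace_INT)
qed

text \<open>H_uni (V j) lies in the range of every power of V j, so powers of V j can be peeled off
  with Vs j, which preserves mixed_part [].\<close>

lemma mixed_part_Nil_subset_vmon_image:
  "set l \<subseteq> {1..n} - A \<Longrightarrow> u \<in> mixed_part [] \<Longrightarrow> u \<in> vmon V l m ` mixed_part []"
proof (induction l arbitrary: u)
  case (Cons j l)
  then have j: "j \<in> {1..n} - A" by simp
  interpret J: adjoint_isometry "V j" "Vs j" by (rule adjoint_isometry_V) (use j in simp)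
  define v where "v = (Vs j ^^ m j) u"
  have "\<And>y. y \<in> mixed_part [] \<Longrightarrow> Vs j y \<in> mixed_part []"
    using mixed_part_unitary_invariant(2)[OF j] by simp
  then have "v \<in> mixed_part []"
    unfolding v_def using Cons.prems(2) by (rule funpow_mem_invariant)
  then have "v \<in> vmon V l m ` mixed_part []" using Cons.IH Cons.prems(1) by simp
  then obtain y where y: "y \<in> mixed_part []" "v = vmon V l m y" by blast
  have "u \<in> H_uni (V j)" using Cons.prems(2) j unfolding mixed_part_def by simp
  then have "u \<in> range (V j ^^ m j)" unfolding H_uni_def by blast
  then have "u = (V j ^^ m j) v" unfolding v_def by (rule J.range_proj_eq_self[symmetric])
  then have "u = vmon V (j # l) m y" using y(2) by (simp add: vmon_Cons)
  then show ?case using y(1) by blast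
qed simp

lemma W_eq_mixed_part_Nil: "W = mixed_part []"
proof -
  have ker: "(\<Inter>i\<in>set ls. ker (Vs i)) = {x. \<forall>a\<in>A. Vs a x = 0}"
    using set_ls by (auto simp: ker_def)
  show ?thesis
  proof (intro equalityI subsetI)
    fix x assume x: "x \<in> W"
    then have xm: "x \<in> vmon V ms m ` {x. \<forall>a\<in>A. Vs a x = 0}" for m
      unfolding W_A_def ker by blast
    have "x \<in> range (V j ^^ k)" if "j \<in> {1..n} - A" for j k
    proof -
      have "vmon V ms ((\<lambda>_. 0)(j := k)) = V j ^^ k"
        using that set_ms by (intro vmon_single[OF distinct_ms]) simp
      then show ?thesis using xm[of "(\<lambda>_. 0)(j := k)"] by auto
    qed
    moreover have "\<forall>a\<in>A. Vs a x = 0" using xm[of "\<lambda>_. 0"] by (simp add: vmon_zero)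
    ultimately show "x \<in> mixed_part []" unfolding mixed_part_Nil_eq H_uni_def by blast
  next
    fix x assume "x \<in> mixed_part []"
    then have "x \<in> vmon V ms m ` mixed_part []" for m
      using set_ms by (intro mixed_part_Nil_subset_vmon_image) auto
    then show "x \<in> W" unfolding W_A_def ker mixed_part_Nil_eq by blast
  qed
qed

lemma H_A_eq_mixed_part: "H_A n V Vs A = mixed_part ls"
  unfolding H_A_eq_INT mixed_part_def wold_piece_def using set_ls A_subset by auto

lemma W_subset_H_A: "W \<subseteq> H_A n V Vs A"
  unfolding H_A_eq_mixed_part W_eq_mixed_part_Nil mixed_part_def
  using funpow_ker_mem_H_iso[where k=0] set_ls by auto

lemma ccspan_vmon_W_subset_H_A: "ccspan (\<Union>k. vmon V ls k ` W) \<subseteq> H_A n V Vs A"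
proof (rule ccspan_minimal)
  show "csubspace (H_A n V Vs A)"
    unfolding H_A_eq_INT by (intro csubspace_INT csubspace_wold_piece)
  show "closed (H_A n V Vs A)"
    unfolding H_A_eq_INT by (intro closed_INT ballI closed_wold_piece)
  have "vmon V ls k w \<in> mixed_part ls" if "w \<in> W" for k w
    using that W_subset_H_A mixed_part_isometric_invariant set_ls
    unfolding H_A_eq_mixed_part by (intro vmon_mem_invariant) auto
  then show "(\<Union>k. vmon V ls k ` W) \<subseteq> H_A n V Vs A"
    unfolding H_A_eq_mixed_part by blast
qed

lemma defect_mem_mixed_part:
  assumes a: "a \<in> A" "a \<notin> set l" and l: "set l \<subseteq> A" and x: "x \<in> mixed_part (a # l)"
  shows "adjoint_isometry.defect (V a) (Vs a) ((Vs a ^^ k) x) \<in> mixed_part l"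
proof -
  have aN: "a \<in> {1..n}" using a A_subset by auto
  interpret Va: adjoint_isometry "V a" "Vs a" by (rule adjoint_isometry_V[OF aN])
  let ?y = "Va.defect ((Vs a ^^ k) x)"
  have iN: "i \<in> {1..n}" if "i \<in> A" for i using that A_subset by auto
  have "?y \<in> H_iso (V i) (Vs i)" if i: "i \<in> set l" for i
  proof -
    have "i \<in> {1..n}" "a \<noteq> i" using i l a iN by auto
    then show ?thesis
      using i x H_iso_invariant[OF aN] unfolding mixed_part_def
      by (intro Va.reducing_defect_mem csubspace_H_iso) auto
  qed
  moreover have "?y \<in> ker (Vs b)" if b: "b \<in> A - set l" for b
  proof (cases "b = a")
    case False
    then have "b \<in> {1..n}" "a \<noteq> b" using b iN by auto
    then show ?thesis
      using b x False ker_Vs_invariant[OF aN] unfolding mixed_part_def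
      by (intro Va.reducing_defect_mem csubspace_ker bounded_clinear_Vs) auto
  qed (simp add: Va.defect_mem_ker)
  moreover have "?y \<in> H_uni (V j)" if j: "j \<in> {1..n} - A" for j
  proof -
    have jN: "j \<in> {1..n}" and "a \<noteq> j" using j a by auto
    moreover have "csubspace (H_uni (V j))"
      by (rule adjoint_isometry.csubspace_H_uni[OF adjoint_isometry_V[OF jN]])
    ultimately show ?thesis
      using j x H_uni_invariant[OF aN] unfolding mixed_part_def
      by (intro Va.reducing_defect_mem) auto
  qed
  ultimately show ?thesis unfolding mixed_part_def by blast
qed

text \<open>Expanding x along the Wold series of V a, for a the head of l, reduces the claim to points
  of mixed_part of the tail.\<close>

lemma mixed_part_subset_ccspan:
  "distinct l \<Longrightarrow> set l \<subseteq> A \<Longrightarrow> mixed_part l \<subseteq> ccspan (\<Union>k. vmon V l k ` W)"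
proof (induction l)
  case Nil
  show ?case by (simp add: W_eq_mixed_part_Nil[symmetric] ccspan_superset)
next
  case (Cons a l)
  have a: "a \<in> A" "a \<notin> set l" and l: "distinct l" "set l \<subseteq> A" using Cons.prems by auto
  then have aN: "a \<in> {1..n}" using A_subset by auto
  interpret Va: adjoint_isometry "V a" "Vs a" by (rule adjoint_isometry_V[OF aN])
  define C where "C = ccspan (\<Union>k. vmon V (a # l) k ` W)"
  have "(V a ^^ k) ` (\<Union>m. vmon V l m ` W) \<subseteq> C" for k
  proof clarify
    fix m w assume "w \<in> W"
    then have "vmon V (a # l) (m(a := k)) w \<in> (\<Union>k. vmon V (a # l) k ` W)"
      by (rule UN_I[where a="m(a := k)", OF UNIV_I imageI])
    then show "(V a ^^ k) (vmon V l m w) \<in> C"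
      unfolding C_def vmon_Cons_fun_upd[OF a(2)] by (rule subsetD[OF ccspan_superset])
  qed
  then have shift: "(V a ^^ k) ` ccspan (\<Union>m. vmon V l m ` W) \<subseteq> C" for k
    unfolding C_def by (intro ccspan_image_subset Va.bounded_clinear_S_pow)
  show ?case
  proof
    fix x assume x: "x \<in> mixed_part (a # l)"
    have "(V a ^^ k) (Va.defect ((Vs a ^^ k) x)) \<in> C" for k
    proof -
      have "Va.defect ((Vs a ^^ k) x) \<in> ccspan (\<Union>m. vmon V l m ` W)"
        using Cons.IH[OF l] defect_mem_mixed_part[OF a l(2) x] by blast
      then show ?thesis using shift[of k] by blast
    qed
    then have "(\<Sum>k<K. (V a ^^ k) (Va.defect ((Vs a ^^ k) x))) \<in> C" for K
      unfolding C_def by (rule csubspace_sum[OF csubspace_ccspan])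
    moreover have "x \<in> H_iso (V a) (Vs a)" using x unfolding mixed_part_def by simp
    ultimately have "x \<in> C"
      unfolding C_def using closed_sequentially[OF closed_ccspan _ Va.H_iso_Wold_series] by blast
    then show "x \<in> ccspan (\<Union>k. vmon V (a # l) k ` W)" unfolding C_def .
  qed
qed

lemma H_A_eq_ccspan_vmon_W: "H_A n V Vs A = ccspan (\<Union>k. vmon V ls k ` W)"
  using mixed_part_subset_ccspan[OF distinct_ls] ccspan_vmon_W_subset_H_A set_ls
  unfolding H_A_eq_mixed_part by blast

end

lemma image_eq_if_scaleC_multiple:
  assumes W: "csubspace W" and f: "bounded_clinear f" and g: "bounded_clinear g"
    and fg: "\<And>y. \<exists>c. c \<noteq> 0 \<and> f y = c *\<^sub>C g y"
  shows "f ` W = g ` W"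
proof (intro equalityI subsetI)
  fix x assume "x \<in> f ` W"
  then obtain y c where y: "y \<in> W" "x = f y" and c: "f y = c *\<^sub>C g y" using fg by blast
  then have "x = g (c *\<^sub>C y)" by (simp add: bounded_clinear_scaleC[OF g])
  then show "x \<in> g ` W" using csubspace_scaleC[OF W y(1)] by blast
next
  fix x assume "x \<in> g ` W"
  then obtain y c where y: "y \<in> W" "x = g y" and c: "c \<noteq> 0" "f y = c *\<^sub>C g y" using fg by blast
  then have "x = f (inverse c *\<^sub>C y)" by (simp add: bounded_clinear_scaleC[OF f] scaleC_scaleC scaleC_one)
  then show "x \<in> f ` W" using csubspace_scaleC[OF W y(1)] by blast
qed

context dnc_partition
begin

lemma csubspace_W: "csubspace W"
  unfolding W_eq_mixed_part_Nil by (rule csubspace_mixed_part_Nil)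

lemma Vs_W_eq_0: "a \<in> A \<Longrightarrow> x \<in> W \<Longrightarrow> Vs a x = 0"
  unfolding W_eq_mixed_part_Nil mixed_part_Nil_eq by blast

lemma vmon_ls_fun_upd_eq:
  assumes "i \<in> set ls"
  shows "\<exists>c. c \<noteq> 0 \<and> vmon V ls (k(i := m)) y = c *\<^sub>C (V i ^^ m) (vmon V ls (k(i := 0)) y)"
proof (rule vmon_fun_upd_eq[OF distinct_ls assms])
  show "j \<in> set ls \<Longrightarrow> j \<noteq> i \<Longrightarrow> quasi_commute (V j) (V i)" for j
    using assms set_ls A_subset by (intro quasi_commute_V_V) auto
  show "j \<in> set ls \<Longrightarrow> bounded_clinear (V j)" for j
    using set_ls A_subset by (intro bounded_clinear_V) auto
qed

text \<open>Pull the i-th power to the front of both monomials; the one with the smaller exponent then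
  meets an extra factor V i, and Vs i kills the remaining monomial of W, which has exponent 0 in i.\<close>

lemma cinner_vmon_W_eq_0:
  assumes i: "i \<in> A" and lt: "k i < k' i" and w: "w \<in> W" and w': "w' \<in> W"
  shows "cinner (vmon V ls k w) (vmon V ls k' w') = 0"
proof -
  have iN: "i \<in> {1..n}" and il: "i \<in> set ls" using i A_subset set_ls by auto
  interpret Vi: adjoint_isometry "V i" "Vs i" by (rule adjoint_isometry_V[OF iN])
  define u where "u = vmon V ls (k(i := 0)) w"
  define u' where "u' = vmon V ls (k'(i := 0)) w'"
  obtain c where c: "vmon V ls k w = c *\<^sub>C (V i ^^ k i) u"
    using vmon_ls_fun_upd_eq[OF il, of k "k i" w] unfolding u_def by auto
  obtain c' where c': "vmon V ls k' w' = c' *\<^sub>C (V i ^^ k' i) u'"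
    using vmon_ls_fun_upd_eq[OF il, of k' "k' i" w'] unfolding u'_def by auto
  have "u \<in> ker (Vs i)"
    unfolding u_def using i w set_ls A_subset Vs_W_eq_0
    by (intro vmon_ker_Vs) (auto simp: ker_def)
  obtain d where "k' i = k i + Suc d" using lt less_iff_Suc_add by auto
  then have "(V i ^^ k' i) u' = (V i ^^ k i) (V i ((V i ^^ d) u'))"
    by (simp add: funpow_add funpow_swap1)
  then have "cinner (vmon V ls k w) (vmon V ls k' w') = cnj c * c' * cinner (Vs i u) ((V i ^^ d) u')"
    by (simp add: c c' cinner_scaleC_left cinner_scaleC_right Vi.cinner_S_pow_S_pow Vi.cinner_S_right)
  then show ?thesis using \<open>u \<in> ker (Vs i)\<close> by (simp add: ker_def)
qed

lemma vmon_W_orthogonal: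
  assumes "i \<in> A" "k i \<noteq> k' i"
  shows "corthogonal (vmon V ls k ` W) (vmon V ls k' ` W)"
  unfolding corthogonal_def
proof clarify
  fix w w' assume w: "w \<in> W" "w' \<in> W"
  show "cinner (vmon V ls k w) (vmon V ls k' w') = 0"
  proof (cases "k i < k' i")
    case False
    then have "k' i < k i" using assms(2) by simp
    then show ?thesis using cinner_vmon_W_eq_0[OF assms(1) _ w(2,1)] cinner_eq_zero_sym by blast
  qed (use cinner_vmon_W_eq_0[OF assms(1) _ w] in blast)
qed

lemma W_reduces_unitary:
  assumes i: "i \<in> {1..n} - A"
  shows "V i ` W \<subseteq> W" "Vs i ` W \<subseteq> W" "V i ` W = W"
proof -
  show inv: "V i ` W \<subseteq> W" "Vs i ` W \<subseteq> W"
    unfolding W_eq_mixed_part_Nil using mixed_part_unitary_invariant[OF i] by auto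
  have "x \<in> V i ` W" if x: "x \<in> W" for x
  proof -
    have "x \<in> H_uni (V i)" using x i unfolding W_eq_mixed_part_Nil mixed_part_def by simp
    then have "x \<in> range (V i ^^ 1)" unfolding H_uni_def by blast
    then obtain t where "x = V i t" by auto
    then have "x = V i (Vs i x)" using Vs_V i by simp
    then show ?thesis using inv(2) x by blast
  qed
  then show "V i ` W = W" using inv(1) by blast
qed

lemma restricted_adjoint_eq:
  assumes i: "i \<in> {1..n} - A" and S: "is_adjoint_on W (V i) S" and y: "y \<in> W"
  shows "S y = Vs i y"
proof -
  interpret Vi: adjoint_isometry "V i" "Vs i" by (rule adjoint_isometry_V) (use i in simp)
  have "S y - Vs i y \<in> W"
    using S y W_reduces_unitary(2)[OF i] unfolding is_adjoint_on_def
    by (intro csubspace_diff[OF csubspace_W]) auto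
  then have "cinner (S y - Vs i y) (S y - Vs i y) = 0"
    using S y unfolding is_adjoint_on_def by (simp add: cinner_diff_right Vi.cinner_S_left)
  then show ?thesis by simp
qed

lemma restricted_commutation:
  assumes i: "i \<in> {1..n} - A" and j: "j \<in> {1..n} - A" and ij: "i \<noteq> j"
    and S: "is_adjoint_on W (V i) S" and x: "x \<in> W"
  shows "S (V j x) = cnj (z i j) *\<^sub>C V j (S x)"
proof -
  have "V j x \<in> W" using W_reduces_unitary(1)[OF j] x by blast
  then show ?thesis
    using restricted_adjoint_eq[OF i S] x Vs_V_commute[of i j] i j ij by simp
qed

lemma V_vmon_W_shift:
  assumes r: "r < length ls"
  shows "V (ls ! r) ` (vmon V ls k ` W) = vmon V ls (k(ls ! r := Suc (k (ls ! r)))) ` W"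
proof -
  define i where "i = ls ! r"
  define k1 where "k1 = k(i := Suc (k i))"
  have il: "i \<in> set ls" unfolding i_def using r by simp
  then have iN: "i \<in> {1..n}" using set_ls A_subset by auto
  have bcl_vmon: "bounded_clinear (vmon V ls k')" for k'
    using set_ls A_subset by (auto intro!: bounded_clinear_vmon bounded_clinear_V)
  have bcl: "bounded_clinear (\<lambda>y. V i (vmon V ls k y))" "bounded_clinear (vmon V ls k1)"
    using bounded_clinear_compose[OF bounded_clinear_V[OF iN] bcl_vmon] bcl_vmon
    by (simp_all add: comp_def)
  have "\<exists>c. c \<noteq> 0 \<and> V i (vmon V ls k y) = c *\<^sub>C vmon V ls k1 y" for y
  proof -
    obtain c where c: "c \<noteq> 0" "vmon V ls k y = c *\<^sub>C (V i ^^ k i) (vmon V ls (k(i := 0)) y)"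
      using vmon_ls_fun_upd_eq[OF il, of k "k i" y] by auto
    obtain c1 where c1: "c1 \<noteq> 0" "vmon V ls k1 y = c1 *\<^sub>C (V i ^^ Suc (k i)) (vmon V ls (k(i := 0)) y)"
      using vmon_ls_fun_upd_eq[OF il, of k "Suc (k i)" y] unfolding k1_def by auto
    have "V i (vmon V ls k y) = (c / c1) *\<^sub>C vmon V ls k1 y"
      using c1 by (simp add: c(2) bounded_clinear_scaleC[OF bounded_clinear_V[OF iN]] scaleC_scaleC)
    moreover have "c / c1 \<noteq> 0" using c(1) c1(1) by simp
    ultimately show ?thesis by blast
  qed
  then have "(\<lambda>y. V i (vmon V ls k y)) ` W = vmon V ls k1 ` W"
    by (rule image_eq_if_scaleC_multiple[OF csubspace_W bcl])
  then show ?thesis unfolding i_def k1_def image_image .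
qed

end

theorem theorem3p6:
  fixes n :: nat and z :: "nat \<Rightarrow> nat \<Rightarrow> complex"
    and V Vs :: "nat \<Rightarrow> 'a::chilbert_space \<Rightarrow> 'a"
    and A :: "nat set" and "is" js :: "nat list"
  assumes "n \<ge> 1"
    and dnc: "doubly_noncommuting n z V Vs"
    and "A \<subseteq> {1..n}"
    and "distinct is" and "set is = A"
    and "distinct js" and "set js = {1..n} - A"
  defines "W \<equiv> W_A V Vs is js"
  shows "W \<subseteq> H_A n V Vs A
    \<and> H_A n V Vs A = ccspan (\<Union>k. vmon V is k ` W)
    \<and> (\<forall>k k'. (\<exists>i\<in>A. k i \<noteq> k' i) \<longrightarrow> corthogonal (vmon V is k ` W) (vmon V is k' ` W))
    \<and> (\<forall>i\<in>{1..n} - A. V i ` W \<subseteq> W \<and> Vs i ` W \<subseteq> W \<and> V i ` W = W)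
    \<and> (\<forall>i\<in>{1..n} - A. \<forall>j\<in>{1..n} - A. i \<noteq> j \<longrightarrow>
          (\<forall>S. is_adjoint_on W (V i) S \<longrightarrow>
             (\<forall>x\<in>W. S (V j x) = cnj (z i j) *\<^sub>C V j (S x))))
    \<and> (\<forall>i\<in>A. \<forall>x\<in>W. Vs i x = 0)
    \<and> (\<forall>r<length is. \<forall>k. V (is ! r) ` (vmon V is k ` W)
          = vmon V is (k(is ! r := Suc (k (is ! r)))) ` W)"
proof -
  interpret dnc_partition n z V Vs A "is" js
    using assms by unfold_locales auto
  have "\<forall>k k'. (\<exists>i\<in>A. k i \<noteq> k' i) \<longrightarrow> corthogonal (vmon V is k ` W) (vmon V is k' ` W)"
    using vmon_W_orthogonal[folded W_def] by blast
  moreover have "\<forall>i\<in>{1..n} - A. V i ` W \<subseteq> W \<and> Vs i ` W \<subseteq> W \<and> V i ` W = W"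
    using W_reduces_unitary[folded W_def] by blast
  moreover have "\<forall>i\<in>{1..n} - A. \<forall>j\<in>{1..n} - A. i \<noteq> j \<longrightarrow>
      (\<forall>S. is_adjoint_on W (V i) S \<longrightarrow> (\<forall>x\<in>W. S (V j x) = cnj (z i j) *\<^sub>C V j (S x)))"
    using restricted_commutation[folded W_def] by blast
  moreover have "\<forall>i\<in>A. \<forall>x\<in>W. Vs i x = 0"
    using Vs_W_eq_0[folded W_def] by blast
  moreover have "\<forall>r<length is. \<forall>k. V (is ! r) ` (vmon V is k ` W)
      = vmon V is (k(is ! r := Suc (k (is ! r)))) ` W"
    using V_vmon_W_shift[folded W_def] by blast
  ultimately show ?thesis
    using W_subset_H_A[folded W_def] H_A_eq_ccspan_vmon_W[folded W_def] by blast
qed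

end
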